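(* Let $f\in{}^b\mathcal{O}(\mathbb{C}^n)$. Then the function ${}^\circ f:\mathbb{C}^n\to\mathbb{C}$, ${}^\circ f(x)=$ standard part of $f(x)$, is holomorphic on $\mathbb{C}^n$. Moreover ${}^\circ\mathrm{Z}(f)\subset\mathrm{Z}({}^\circ f)$, and if ${}^\circ f$ is not constant then ${}^\circ\mathrm{Z}(f)=\mathrm{Z}({}^\circ f)$.
   Context: ${}^*\mathbb{C}$ is the ultrapower of $\mathbb{C}$ by a nonprincipal ultrafilter on $\mathbb{N}$, ${}^b\mathbb{C}$ its bounded elements; ${}^*\mathcal{O}(\mathbb{C}^n)$ is the ultrapower of the ring of entire functions on $\mathbb{C}^n$ (internal entire functions ${}^*\mathbb{C}^n\to{}^*\mathbb{C}$), and ${}^b\mathcal{O}(\mathbb{C}^n):=\{f\in{}^*\mathcal{O}(\mathbb{C}^n): f({}^b\mathbb{C}^n)\subset{}^b\mathbb{C}\}$. $\mathrm{Z}(f)=\{x\in{}^*\mathbb{C}^n: f(x)=0\}$, $\mathrm{Z}({}^\circ f)=\{x\in\mathbb{C}^n:{}^\circ f(x)=0\}$, and for $B\subset{}^*\mathbb{C}^n$, ${}^\circ B=\{x\in\mathbb{C}^n: \mu(x)\cap B\neq\emptyset\}$ with $\mu(x)$ the set of points infinitely close to $x$. *)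

theory Defs
  imports "HOL-Analysis.Analysis"
begin

text \<open>Ultrapower model: a hyper-element of a set X is represented by a sequence
  nat => X, two sequences being identified when they agree U-eventually.
  All notions below are invariant under this identification.\<close>

definition nonprincipal_ultrafilter :: "nat filter \<Rightarrow> bool" where
  "nonprincipal_ultrafilter U \<longleftrightarrow> U \<noteq> bot
     \<and> (\<forall>P. eventually P U \<or> eventually (\<lambda>k. \<not> P k) U)
     \<and> (\<forall>k. eventually (\<lambda>j. j \<noteq> k) U)"

definition holomorphic_n :: "(complex^'n) set \<Rightarrow> (complex^'n \<Rightarrow> complex) \<Rightarrow> bool" where
  "holomorphic_n S f \<longleftrightarrow>
     (\<forall>x\<in>S. \<exists>D. (f has_derivative D) (at x) \<and> (\<forall>c v. D (c *s v) = c * D v))"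

definition inf_close :: "nat filter \<Rightarrow> (nat \<Rightarrow> 'a::metric_space) \<Rightarrow> 'a \<Rightarrow> bool" where
  "inf_close U x a \<longleftrightarrow> (\<forall>e>0. eventually (\<lambda>k. dist (x k) a < e) U)"

definition hbounded :: "nat filter \<Rightarrow> (nat \<Rightarrow> 'a::real_normed_vector) \<Rightarrow> bool" where
  "hbounded U x \<longleftrightarrow> (\<exists>M. eventually (\<lambda>k. norm (x k) \<le> M) U)"

definition stpart :: "nat filter \<Rightarrow> (nat \<Rightarrow> 'a::metric_space) \<Rightarrow> 'a" where
  "stpart U x = (THE a. inf_close U x a)"

text \<open>Internal entire functions *O(C^n): represented by sequences of functions that are
  U-eventually entire; f(x) is computed componentwise.\<close>
definition internal_entire :: "nat filter \<Rightarrow> (nat \<Rightarrow> complex^'n \<Rightarrow> complex) \<Rightarrow> bool" where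
  "internal_entire U F \<longleftrightarrow> eventually (\<lambda>k. holomorphic_n UNIV (F k)) U"

definition bO :: "nat filter \<Rightarrow> (nat \<Rightarrow> complex^'n \<Rightarrow> complex) \<Rightarrow> bool" where
  "bO U F \<longleftrightarrow> internal_entire U F
     \<and> (\<forall>x. hbounded U x \<longrightarrow> hbounded U (\<lambda>k. F k (x k)))"

definition stfun :: "nat filter \<Rightarrow> (nat \<Rightarrow> complex^'n \<Rightarrow> complex) \<Rightarrow> complex^'n \<Rightarrow> complex" where
  "stfun U F = (\<lambda>a. stpart U (\<lambda>k. F k a))"

definition hzeros :: "nat filter \<Rightarrow> (nat \<Rightarrow> complex^'n \<Rightarrow> complex) \<Rightarrow> (nat \<Rightarrow> (complex^'n)) set" where
  "hzeros U F = {x. eventually (\<lambda>k. F k (x k) = 0) U}"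

definition shadow :: "nat filter \<Rightarrow> (nat \<Rightarrow> 'a::metric_space) set \<Rightarrow> 'a set" where
  "shadow U B = {a. \<exists>x\<in>B. inf_close U x a}"

end

theory Submission
  imports Defs "HOL-Complex_Analysis.Complex_Analysis"
begin

text \<open>Since f takes limited values at limited points, a saturation argument shows that
  for U-almost all k the entire functions \<open>f\<^sub>k\<close> are bounded by one standard constant on
  each standard ball. Cauchy estimates then make them equi-Lipschitz there, with a uniform
  quadratic bound on their first-order Taylor remainders, so the pointwise ultralimit \<open>\<degree>f\<close> is
  holomorphic with derivative the ultralimit of the derivatives, and a zero of f infinitely
  close to a forces \<open>\<degree>f(a) = 0\<close>. Conversely, let \<open>\<degree>f(a) = 0\<close> with \<open>\<degree>f\<close> not constant. On a
  complex line through a and a point where \<open>\<degree>f\<close> does not vanish, the \<open>f\<^sub>k\<close> converge to \<open>\<degree>f\<close>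
  uniformly on compacta; if f had no zeros in some standard neighbourhood of a, Hurwitz's
  theorem along a suitable sequence of indices would forbid the zero of \<open>\<degree>f\<close> at a.\<close>

lemma nonprincipal_ultrafilter_nonbot: "nonprincipal_ultrafilter U \<Longrightarrow> U \<noteq> bot"
  by (simp add: nonprincipal_ultrafilter_def)

lemma nonprincipal_ultrafilter_eventually_not:
  "nonprincipal_ultrafilter U \<Longrightarrow> \<not> eventually P U \<Longrightarrow> eventually (\<lambda>k. \<not> P k) U"
  by (auto simp: nonprincipal_ultrafilter_def)

lemma nonprincipal_ultrafilter_eventually_ge:
  assumes "nonprincipal_ultrafilter U"
  shows "eventually (\<lambda>k. m \<le> k) U"
proof (induction m)
  case (Suc m)
  have "eventually (\<lambda>k. k \<noteq> m) U"
    using assms by (simp add: nonprincipal_ultrafilter_def)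
  with Suc show ?case by eventually_elim auto
qed simp

text \<open>Countable saturation: at index k we take a witness for the largest level
  m \<le> k that is still satisfiable at k.\<close>

lemma nonprincipal_ultrafilter_diagonal:
  fixes Q :: "nat \<Rightarrow> nat \<Rightarrow> 'a \<Rightarrow> bool"
  assumes U: "nonprincipal_ultrafilter U"
    and ev: "\<And>m. eventually (\<lambda>k. \<exists>x. Q m k x) U"
    and mono: "\<And>m m' k x. m \<le> m' \<Longrightarrow> Q m' k x \<Longrightarrow> Q m k x"
  shows "\<exists>X. \<forall>m. eventually (\<lambda>k. Q m k (X k)) U"
proof -
  define level where "level k = (GREATEST m. m \<le> k \<and> (\<exists>x. Q m k x))" for k
  define X where "X k = (SOME x. Q (level k) k x)" for k
  have "eventually (\<lambda>k. Q m k (X k)) U" for m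
    using ev[of m] nonprincipal_ultrafilter_eventually_ge[OF U, of m]
  proof eventually_elim
    case (elim k)
    have "level k \<le> k \<and> (\<exists>x. Q (level k) k x)"
      unfolding level_def by (rule GreatestI_nat[of _ m k]) (use elim in auto)
    then have "Q (level k) k (X k)"
      unfolding X_def by (blast intro: someI_ex)
    moreover have "m \<le> level k"
      unfolding level_def by (rule Greatest_le_nat[of _ m k]) (use elim in auto)
    ultimately show ?case using mono by blast
  qed
  then show ?thesis by blast
qed

lemma nonprincipal_ultrafilter_tendsto_witness:
  fixes a :: "'a::metric_space"
  assumes U: "nonprincipal_ultrafilter U"
    and near: "\<And>e. e > 0 \<Longrightarrow> eventually (\<lambda>k. \<exists>x. dist x a < e \<and> P k x) U"
  shows "\<exists>X. (X \<longlongrightarrow> a) U \<and> eventually (\<lambda>k. P k (X k)) U"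
proof -
  have "\<exists>X. \<forall>m. eventually (\<lambda>k. dist (X k) a < 1 / (real m + 1) \<and> P k (X k)) U"
  proof (rule nonprincipal_ultrafilter_diagonal[OF U])
    show "eventually (\<lambda>k. \<exists>x. dist x a < 1 / (real m + 1) \<and> P k x) U" for m
      by (rule near) simp
    fix m m' :: nat and k x
    assume "m \<le> m'" and "dist x a < 1 / (real m' + 1) \<and> P k x"
    moreover have "1 / (real m' + 1) \<le> 1 / (real m + 1)"
      using \<open>m \<le> m'\<close> by (simp add: frac_le)
    ultimately show "dist x a < 1 / (real m + 1) \<and> P k x" by linarith
  qed
  then obtain X where X: "\<And>m. eventually (\<lambda>k. dist (X k) a < 1 / (real m + 1) \<and> P k (X k)) U"
    by blast
  have "(X \<longlongrightarrow> a) U"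
  proof (rule tendstoI)
    fix e :: real assume "e > 0"
    then obtain m :: nat where "1 / (real m + 1) < e"
      by (metis nat_approx_posE of_nat_Suc add.commute)
    with X[of m] show "eventually (\<lambda>k. dist (X k) a < e) U"
      by (auto elim: eventually_mono)
  qed
  with X[of 0] show ?thesis by (auto elim: eventually_mono)
qed

lemma nonprincipal_ultrafilter_bounded_convergent:
  fixes X :: "nat \<Rightarrow> 'a::{heine_borel,real_normed_vector}"
  assumes U: "nonprincipal_ultrafilter U" and B: "eventually (\<lambda>k. norm (X k) \<le> B) U"
  shows "\<exists>a. (X \<longlongrightarrow> a) U"
proof -
  have "filtermap X U \<noteq> bot"
    using nonprincipal_ultrafilter_nonbot[OF U] by (simp add: filtermap_bot_iff)
  moreover have "eventually (\<lambda>y. y \<in> cball 0 B) (filtermap X U)"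
    using B by (simp add: eventually_filtermap)
  ultimately obtain a where a: "inf (nhds a) (filtermap X U) \<noteq> bot"
    using compact_cball[of 0 B] unfolding compact_filter by blast
  have "eventually (\<lambda>k. X k \<in> S) U" if "open S" "a \<in> S" for S
  proof (rule ccontr)
    assume "\<not> ?thesis"
    then have "eventually (\<lambda>y. y \<notin> S) (filtermap X U)"
      using nonprincipal_ultrafilter_eventually_not[OF U] by (simp add: eventually_filtermap)
    moreover have "eventually (\<lambda>y. y \<in> S) (nhds a)"
      using that eventually_nhds by blast
    ultimately have "eventually (\<lambda>y. False) (inf (nhds a) (filtermap X U))"
      unfolding eventually_inf by blast
    with a show False by (simp add: eventually_False)
  qed
  then show ?thesis by (auto simp: tendsto_def)
qed

lemma inf_close_iff_tendsto: "inf_close U x a \<longleftrightarrow> (x \<longlongrightarrow> a) U"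
  by (simp add: inf_close_def tendsto_iff)

lemma stpart_eq_limit:
  assumes "nonprincipal_ultrafilter U" and "(x \<longlongrightarrow> a) U"
  shows "stpart U x = a"
  unfolding stpart_def inf_close_iff_tendsto
  using assms tendsto_unique nonprincipal_ultrafilter_nonbot by blast

lemma has_derivative_quadratic_remainder:
  fixes g :: "'a::real_normed_vector \<Rightarrow> 'b::real_normed_vector"
  assumes D: "bounded_linear D" and r: "r > 0"
    and rem: "\<And>h. norm h \<le> r \<Longrightarrow> norm (g (a + h) - g a - D h) \<le> C * norm h ^ 2"
  shows "(g has_derivative D) (at a)"
  unfolding has_derivative_at
proof (intro conjI D)
  have "eventually (\<lambda>h. norm (norm (g (a + h) - g a - D h) / norm h) \<le> C * norm h) (at 0)"
    unfolding eventually_at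
  proof (intro exI[of _ r] conjI ballI impI r)
    fix h :: 'a assume "h \<noteq> 0 \<and> dist h 0 < r"
    with rem[of h] show "norm (norm (g (a + h) - g a - D h) / norm h) \<le> C * norm h"
      by (simp add: divide_le_eq power2_eq_square mult.assoc)
  qed
  moreover have "((\<lambda>h. C * norm h) \<longlongrightarrow> 0) (at (0::'a))"
    by (intro tendsto_mult_right_zero tendsto_norm_zero tendsto_ident_at)
  ultimately show "((\<lambda>h. norm (g (a + h) - g a - D h) / norm h) \<longlongrightarrow> 0) (at 0)"
    by (rule Lim_null_comparison)
qed

lemma has_derivative_limit:
  fixes f :: "'i \<Rightarrow> 'a::real_normed_vector \<Rightarrow> 'b::real_normed_vector"
  assumes F: "F \<noteq> bot" and r: "r > 0"
    and lim: "\<And>x. ((\<lambda>k. f k x) \<longlongrightarrow> g x) F"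
    and Dlim: "\<And>h. ((\<lambda>k. Df k h) \<longlongrightarrow> D h) F"
    and lin: "eventually (\<lambda>k. linear (Df k)) F"
    and bound: "eventually (\<lambda>k. \<forall>h. norm (Df k h) \<le> M * norm h) F"
    and rem: "eventually (\<lambda>k. \<forall>h. norm h \<le> r \<longrightarrow>
                norm (f k (a + h) - f k a - Df k h) \<le> C * norm h ^ 2) F"
  shows "(g has_derivative D) (at a)"
proof (rule has_derivative_quadratic_remainder[OF _ r])
  have "linear D"
  proof
    show "D (x + y) = D x + D y" for x y
    proof (rule tendsto_unique[OF F Dlim])
      show "((\<lambda>k. Df k (x + y)) \<longlongrightarrow> D x + D y) F"
        using tendsto_add[OF Dlim Dlim] by (rule Lim_transform_eventually)
          (use lin in \<open>auto elim: eventually_mono simp: linear_add\<close>)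
    qed
    show "D (c *\<^sub>R x) = c *\<^sub>R D x" for c x
    proof (rule tendsto_unique[OF F Dlim])
      show "((\<lambda>k. Df k (c *\<^sub>R x)) \<longlongrightarrow> c *\<^sub>R D x) F"
        using tendsto_scaleR[OF tendsto_const Dlim] by (rule Lim_transform_eventually)
          (use lin in \<open>auto elim: eventually_mono simp: linear_scale\<close>)
    qed
  qed
  moreover have "norm (D h) \<le> M * norm h" for h
    by (rule tendsto_upperbound[OF tendsto_norm[OF Dlim] _ F])
       (use bound in \<open>auto elim: eventually_mono\<close>)
  ultimately show "bounded_linear D"
    by (intro bounded_linear_intro[where K = M]) (auto simp: linear_add linear_scale mult.commute)
  show "norm (g (a + h) - g a - D h) \<le> C * norm h ^ 2" if "norm h \<le> r" for h
    by (rule tendsto_upperbound[OF tendsto_norm[OF tendsto_diff[OF tendsto_diff[OF lim lim] Dlim]] _ F])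
       (use rem that in \<open>auto elim: eventually_mono\<close>)
qed

text \<open>Cover K by finitely many balls of radius \<open>e / (3 (\<bar>L\<bar> + 1))\<close> and use the
  pointwise convergence at their centres.\<close>

lemma uniform_limit_equi_lipschitz:
  fixes G :: "'i \<Rightarrow> 'a::metric_space \<Rightarrow> 'b::metric_space"
  assumes K: "compact K" and F: "F \<noteq> bot"
    and lim: "\<And>x. x \<in> K \<Longrightarrow> ((\<lambda>k. G k x) \<longlongrightarrow> g x) F"
    and lip: "eventually (\<lambda>k. \<forall>x\<in>K. \<forall>y\<in>K. dist (G k x) (G k y) \<le> L * dist x y) F"
  shows "uniform_limit K G g F"
proof (rule uniform_limitI)
  fix e :: real assume e: "e > 0"
  have lip_g: "dist (g x) (g y) \<le> L * dist x y" if "x \<in> K" "y \<in> K" for x y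
    by (rule tendsto_upperbound[OF tendsto_dist[OF lim lim] _ F])
       (use lip that in \<open>auto elim: eventually_mono\<close>)
  define d where "d = e / (3 * (\<bar>L\<bar> + 1))"
  have d: "d > 0" and Ld: "\<bar>L\<bar> * d < e / 3"
    using e by (auto simp: d_def field_simps abs_if mult_less_cancel_left_pos split: if_splits)
  obtain C where C: "finite C" "C \<subseteq> K" "K \<subseteq> (\<Union>c\<in>C. ball c d)"
    using compact_imp_seq_compact[OF K] seq_compact_imp_totally_bounded d by metis
  have "eventually (\<lambda>k. \<forall>c\<in>C. dist (G k c) (g c) < e / 3) F"
    by (intro eventually_ball_finite[OF C(1)] ballI tendstoD[OF lim]) (use C e in auto)
  with lip show "eventually (\<lambda>k. \<forall>x\<in>K. dist (G k x) (g x) < e) F"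
  proof eventually_elim
    case (elim k)
    show ?case
    proof
      fix x assume x: "x \<in> K"
      with C(3) have "x \<in> (\<Union>c\<in>C. ball c d)" by blast
      then obtain c where c: "c \<in> C" "dist c x < d" by auto
      with C(2) have "c \<in> K" by blast
      have "dist (G k x) (g x) \<le> dist (G k x) (G k c) + dist (G k c) (g c) + dist (g c) (g x)"
        using dist_triangle[of "G k x" "g x" "G k c"] dist_triangle[of "G k c" "g x" "g c"]
        by linarith
      also have "\<dots> < \<bar>L\<bar> * d + e / 3 + \<bar>L\<bar> * d"
      proof -
        have "L * dist c x \<le> \<bar>L\<bar> * dist c x" by (rule mult_right_mono) auto
        also have "\<dots> \<le> \<bar>L\<bar> * d" using c(2) by (intro mult_left_mono) auto
        finally have "L * dist c x \<le> \<bar>L\<bar> * d" .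
        then show ?thesis
          using elim(1)[rule_format, OF x \<open>c \<in> K\<close>] elim(2)[rule_format, OF c(1)]
            lip_g[OF \<open>c \<in> K\<close> x] unfolding dist_commute[of x c] by linarith
      qed
      also have "\<dots> < e" using Ld by linarith
      finally show "dist (G k x) (g x) < e" .
    qed
  qed
qed

lemma uniform_limit_extract_sequence:
  assumes lim: "uniform_limit K G g F" and F: "F \<noteq> bot" and P: "eventually P F"
  shows "\<exists>r::nat \<Rightarrow> 'i. (\<forall>j. P (r j)) \<and> uniform_limit K (\<lambda>j. G (r j)) g sequentially"
proof -
  have "\<exists>k. P k \<and> (\<forall>x\<in>K. dist (G k x) (g x) < 1 / (real j + 1))" for j :: nat
    using eventually_happens'[OF F eventually_conj[OF P uniform_limitD[OF lim]]] by simp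
  then obtain r where r: "\<And>j. P (r j) \<and> (\<forall>x\<in>K. dist (G (r j) x) (g x) < 1 / (real j + 1))"
    by metis
  have "uniform_limit K (\<lambda>j. G (r j)) g sequentially"
    unfolding uniform_limit_sequentially_iff
  proof (intro allI impI)
    fix e :: real assume "e > 0"
    then obtain N :: nat where N: "1 / (real N + 1) < e"
      by (metis nat_approx_posE of_nat_Suc add.commute)
    have "dist (G (r j) x) (g x) < e" if "N \<le> j" "x \<in> K" for j x
    proof -
      have "1 / (real j + 1) \<le> 1 / (real N + 1)" using that(1) by (simp add: frac_le)
      with r[of j] that(2) N show ?thesis by fastforce
    qed
    then show "\<exists>N. \<forall>j\<ge>N. \<forall>x\<in>K. dist (G (r j) x) (g x) < e" by blast
  qed
  with r show ?thesis by blast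
qed

lemma entire_first_order_estimates:
  fixes g :: "complex \<Rightarrow> complex"
  assumes hol: "g holomorphic_on UNIV" and r: "r > 0"
    and bd: "\<And>t. norm t \<le> r \<Longrightarrow> norm (g t) \<le> M"
  shows "norm (deriv g 0) \<le> M / r"
    and "norm t \<le> r \<Longrightarrow> norm (g t - g 0 - deriv g 0 * t) \<le> 3 * M / r^2 * norm t ^ 2"
proof -
  have "norm ((deriv ^^ 1) g 0) \<le> fact 1 * M / r^1"
    by (rule Cauchy_inequality)
       (use hol r bd in \<open>auto intro: holomorphic_on_subset holomorphic_on_imp_continuous_on\<close>)
  then show deriv_bound: "norm (deriv g 0) \<le> M / r" by simp
  have "norm (g 0) \<le> M" using bd[of 0] r by simp
  then have M: "0 \<le> M" using norm_ge_zero[of "g 0"] by linarith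
  text \<open>The second divided difference at 0 is entire, so the maximum modulus
    principle bounds it inside the disc by its values on the circle.\<close>
  define g1 where "g1 = (\<lambda>z. if z = 0 then deriv g 0 else (g z - g 0) / (z - 0))"
  define g2 where "g2 = (\<lambda>z. if z = 0 then deriv g1 0 else (g1 z - g1 0) / (z - 0))"
  have "g1 holomorphic_on UNIV"
    unfolding g1_def by (rule pole_lemma_open) (use hol in auto)
  then have hol2: "g2 holomorphic_on UNIV"
    unfolding g2_def by (rule pole_lemma_open) auto
  have g2_eq: "g2 z = (g z - g 0 - deriv g 0 * z) / z^2" if "z \<noteq> 0" for z
    using that by (simp add: g2_def g1_def field_simps power2_eq_square)
  assume t: "norm t \<le> r"
  show "norm (g t - g 0 - deriv g 0 * t) \<le> 3 * M / r^2 * norm t ^ 2"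
  proof (cases "t = 0")
    case False
    have "norm (g2 t) \<le> 3 * M / r^2"
    proof (rule maximum_modulus_frontier[of g2 "cball 0 r"])
      show "g2 holomorphic_on interior (cball 0 r)" "continuous_on (closure (cball 0 r)) g2"
        using hol2 by (auto intro: holomorphic_on_subset holomorphic_on_imp_continuous_on)
      show "bounded (cball (0::complex) r)" "t \<in> cball 0 r" using t by auto
    next
      fix z :: complex assume "z \<in> frontier (cball 0 r)"
      then have z: "norm z = r" using r by simp
      have "norm (g z - g 0 - deriv g 0 * z) \<le> norm (g z) + norm (g 0) + norm (deriv g 0) * norm z"
        using norm_triangle_ineq4[of "g z - g 0" "deriv g 0 * z"] norm_triangle_ineq4[of "g z" "g 0"]
        by (simp add: norm_mult)
      also have "\<dots> \<le> M + M + M / r * r"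
        using bd[of z] bd[of 0] deriv_bound z r M by (intro add_mono mult_mono) auto
      finally have "norm (g z - g 0 - deriv g 0 * z) \<le> 3 * M" using r by simp
      moreover have "z \<noteq> 0" using z r by auto
      ultimately show "norm (g2 z) \<le> 3 * M / r^2"
        using g2_eq z r by (simp add: norm_divide norm_power divide_right_mono)
    qed
    then show ?thesis
      using g2_eq[OF False] False by (simp add: norm_divide norm_power divide_le_eq)
  qed simp
qed

lemma entire_nonconstant_not_constant_on_ball:
  fixes g :: "complex \<Rightarrow> complex"
  assumes hol: "g holomorphic_on UNIV" and ne: "g z \<noteq> g w" and r: "r > 0"
  shows "\<not> g constant_on ball c r"
proof
  assume "g constant_on ball c r"
  then obtain y where y: "\<And>x. x \<in> ball c r \<Longrightarrow> g x = y" unfolding constant_on_def by blast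
  have "g x = y" for x
    by (rule analytic_continuation_open[of "ball c r" UNIV g "\<lambda>_. y"]) (use hol y r in auto)
  with ne show False by simp
qed

lemma norm_smult_vec: "norm (c *s (x::complex^'n)) = cmod c * norm x"
  unfolding norm_vec_def by (simp add: norm_mult L2_set_right_distrib)

lemma scaleR_eq_smult_vec: "r *\<^sub>R (x::complex^'n) = complex_of_real r *s x"
  by (vector scaleR_conv_of_real)

lemma holomorphic_n_derivative:
  assumes "holomorphic_n UNIV f"
  shows "(f has_derivative frechet_derivative f (at x)) (at x)"
    and "frechet_derivative f (at x) (c *s v) = c * frechet_derivative f (at x) v"
proof -
  obtain D where D: "(f has_derivative D) (at x)" "\<And>c v. D (c *s v) = c * D v"
    using assms unfolding holomorphic_n_def by blast
  with frechet_derivative_at[OF D(1)]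
  show "(f has_derivative frechet_derivative f (at x)) (at x)"
    and "frechet_derivative f (at x) (c *s v) = c * frechet_derivative f (at x) v" by simp_all
qed

lemma has_field_derivative_line:
  fixes f :: "complex^'n \<Rightarrow> complex"
  assumes "(f has_derivative D) (at (a + t *s v))" and "\<And>c w. D (c *s w) = c * D w"
  shows "((\<lambda>t. f (a + t *s v)) has_field_derivative D v) (at t)"
proof -
  have "bounded_linear (\<lambda>h::complex. h *s v)"
    by (rule bounded_linear_intro[where K="norm v"])
       (auto simp: vector_sadd_rdistrib scaleR_eq_smult_vec vector_smult_assoc
         scaleR_conv_of_real norm_smult_vec)
  then have "((\<lambda>t. a + t *s v) has_derivative (\<lambda>h. h *s v)) (at t)"
    using has_derivative_add[OF has_derivative_const[of a] bounded_linear_imp_has_derivative]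
    by simp
  from has_derivative_compose[OF this assms(1)]
  show ?thesis
    unfolding has_field_derivative_def o_def using assms(2) by (simp add: mult.commute[of _ "D v"])
qed

lemma holomorphic_on_line:
  fixes f :: "complex^'n \<Rightarrow> complex"
  assumes "holomorphic_n UNIV f"
  shows "(\<lambda>t. f (a + t *s v)) holomorphic_on UNIV"
  using assms has_field_derivative_line
  unfolding holomorphic_on_def field_differentiable_def holomorphic_n_def by blast

text \<open>Restrict f to the complex line through c in the direction of h.\<close>

lemma holomorphic_n_first_order_estimates:
  fixes f :: "complex^'n \<Rightarrow> complex"
  assumes hol: "holomorphic_n UNIV f" and r: "r > 0"
    and bd: "\<And>x. dist x c \<le> r \<Longrightarrow> norm (f x) \<le> M"
  defines "D \<equiv> frechet_derivative f (at c)"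
  shows "norm (D h) \<le> M / r * norm h"
    and "norm h \<le> r \<Longrightarrow> norm (f (c + h) - f c - D h) \<le> 3 * M / r^2 * norm h ^ 2"
proof -
  note D = holomorphic_n_derivative[OF hol, of c, folded D_def]
  have "norm (D h) \<le> M / r * norm h
      \<and> (norm h \<le> r \<longrightarrow> norm (f (c + h) - f c - D h) \<le> 3 * M / r^2 * norm h ^ 2)"
  proof (cases "h = 0")
    case True
    then show ?thesis using D(2)[of 0 0] by simp
  next
    case False
    define s where "s = complex_of_real (norm h)"
    define v where "v = inverse s *s h"
    have s: "s \<noteq> 0" "norm s = norm h" using False by (simp_all add: s_def)
    have "norm v = 1" using False by (simp add: v_def norm_smult_vec s_def norm_inverse)
    have h: "h = s *s v" using s by (simp add: v_def vector_smult_assoc)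
    define g where "g = (\<lambda>t. f (c + t *s v))"
    have "(g has_field_derivative D v) (at 0)"
      unfolding g_def by (rule has_field_derivative_line) (use D in auto)
    then have dg: "deriv g 0 = D v" by (rule DERIV_imp_deriv)
    have "norm (g t) \<le> M" if "norm t \<le> r" for t
      unfolding g_def by (rule bd) (use that \<open>norm v = 1\<close> in \<open>simp add: dist_norm norm_smult_vec\<close>)
    moreover have "g holomorphic_on UNIV" unfolding g_def by (rule holomorphic_on_line[OF hol])
    ultimately have E: "norm (deriv g 0) \<le> M / r"
        "norm s \<le> r \<Longrightarrow> norm (g s - g 0 - deriv g 0 * s) \<le> 3 * M / r^2 * norm s ^ 2"
      using entire_first_order_estimates[OF _ r, of g M] by blast+
    have Dh: "D h = s * D v" using h D(2) by simp
    have "norm h * norm (D v) \<le> norm h * (M / r)"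
      using E(1) dg by (intro mult_left_mono) auto
    moreover have "norm (g s - g 0 - deriv g 0 * s) = norm (f (c + h) - f c - D h)"
      using h Dh dg by (simp add: g_def mult.commute)
    ultimately show ?thesis
      using E(2) s Dh by (simp add: norm_mult mult.commute)
  qed
  then show "norm (D h) \<le> M / r * norm h"
    and "norm h \<le> r \<Longrightarrow> norm (f (c + h) - f c - D h) \<le> 3 * M / r^2 * norm h ^ 2"
    by auto
qed

lemma holomorphic_n_lipschitz:
  fixes f :: "complex^'n \<Rightarrow> complex"
  assumes hol: "holomorphic_n UNIV f" and bd: "\<And>x. norm x \<le> R + 1 \<Longrightarrow> norm (f x) \<le> M"
    and x: "norm x \<le> R" and y: "norm y \<le> R"
  shows "norm (f x - f y) \<le> 4 * M * dist x y"
proof -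
  have bd1: "norm (f z) \<le> M" if "dist z y \<le> 1" for z
    using that y norm_triangle_ineq2[of z y] by (intro bd) (simp add: dist_norm)
  have "norm (f y) \<le> M" by (rule bd1) simp
  then have M: "0 \<le> M" using norm_ge_zero order.trans by blast
  define h where "h = x - y"
  have x_eq: "x = y + h" and dist_eq: "dist x y = norm h" by (simp_all add: h_def dist_norm)
  show ?thesis
  proof (cases "norm h \<le> 1")
    case True
    let ?D = "frechet_derivative f (at y)"
    note E = holomorphic_n_first_order_estimates[where c = y, OF hol zero_less_one bd1]
    have "norm (f x - f y) \<le> norm (?D h) + norm (f (y + h) - f y - ?D h)"
      using norm_triangle_ineq[of "?D h" "f (y + h) - f y - ?D h"] x_eq by simp
    also have "\<dots> \<le> M * norm h + 3 * M * norm h ^ 2"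
      using E(1)[of h] E(2)[of h] True by simp
    also have "\<dots> \<le> M * norm h + 3 * M * norm h"
      using True M by (intro add_left_mono mult_left_mono) (auto simp: power2_eq_square mult_left_le)
    finally show ?thesis using dist_eq by simp
  next
    case False
    have "norm (f x - f y) \<le> M + M"
      using bd[of x] bd[of y] x y norm_triangle_ineq4[of "f x" "f y"] by simp
    also have "\<dots> \<le> 4 * M * dist x y"
      using False dist_eq M mult_left_mono[of 1 "dist x y" "4 * M"] by simp
    finally show ?thesis .
  qed
qed

lemma bO_eventually_bounded_on_cball:
  assumes U: "nonprincipal_ultrafilter U" and F: "bO U F"
  shows "\<exists>M. eventually (\<lambda>k. holomorphic_n UNIV (F k) \<and> (\<forall>x. norm x \<le> R \<longrightarrow> norm (F k x) \<le> M)) U"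
proof -
  have "\<exists>M. eventually (\<lambda>k. \<forall>x. norm x \<le> R \<longrightarrow> norm (F k x) \<le> M) U"
  proof (rule ccontr)
    assume unbounded: "\<not> ?thesis"
    text \<open>Otherwise saturation yields a bounded hyper-point at which f is unlimited.\<close>
    have ev: "eventually (\<lambda>k. \<exists>x. norm x \<le> R \<and> norm (F k x) > real m) U" for m :: nat
      using nonprincipal_ultrafilter_eventually_not[OF U, of "\<lambda>k. \<forall>x. norm x \<le> R \<longrightarrow> norm (F k x) \<le> real m"]
        unbounded by (auto elim: eventually_mono simp: not_le)
    have "\<exists>X. \<forall>m. eventually (\<lambda>k. norm (X k) \<le> R \<and> norm (F k (X k)) > real m) U"
      by (rule nonprincipal_ultrafilter_diagonal[OF U ev]) auto
    then obtain X where X: "\<And>m. eventually (\<lambda>k. norm (X k) \<le> R \<and> norm (F k (X k)) > real m) U"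
      by blast
    have "hbounded U X"
      unfolding hbounded_def using X[of 0] by (auto elim: eventually_mono)
    with F obtain B where B: "eventually (\<lambda>k. norm (F k (X k)) \<le> B) U"
      by (auto simp: bO_def hbounded_def)
    obtain m :: nat where "B \<le> real m" using real_arch_simple by blast
    with eventually_conj[OF B X[of m]] have "eventually (\<lambda>k. False) U"
      by (auto elim: eventually_mono)
    with nonprincipal_ultrafilter_nonbot[OF U] show False by (simp add: eventually_False)
  qed
  moreover have "eventually (\<lambda>k. holomorphic_n UNIV (F k)) U"
    using F by (simp add: bO_def internal_entire_def)
  ultimately show ?thesis by (auto intro: eventually_conj)
qed

lemma tendsto_stfun:
  assumes U: "nonprincipal_ultrafilter U" and F: "bO U F"
  shows "((\<lambda>k. F k a) \<longlongrightarrow> stfun U F a) U"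
proof -
  obtain M where "eventually (\<lambda>k. holomorphic_n UNIV (F k) \<and> (\<forall>x. norm x \<le> norm a \<longrightarrow> norm (F k x) \<le> M)) U"
    using bO_eventually_bounded_on_cball[OF U F] by blast
  then have "eventually (\<lambda>k. norm (F k a) \<le> M) U" by (auto elim: eventually_mono)
  then obtain l where "((\<lambda>k. F k a) \<longlongrightarrow> l) U"
    using nonprincipal_ultrafilter_bounded_convergent[OF U, of "\<lambda>k. F k a"] by blast
  with stpart_eq_limit[OF U this] show ?thesis by (simp add: stfun_def)
qed

lemma bO_eventually_first_order_estimates:
  fixes F :: "nat \<Rightarrow> complex^'n \<Rightarrow> complex" and a :: "complex^'n"
  assumes U: "nonprincipal_ultrafilter U" and F: "bO U F"
  defines "Df k \<equiv> frechet_derivative (F k) (at a)"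
  shows "\<exists>M. eventually (\<lambda>k. linear (Df k) \<and> (\<forall>c w. Df k (c *s w) = c * Df k w)
      \<and> (\<forall>h. norm (Df k h) \<le> M * norm h)
      \<and> (\<forall>h. norm h \<le> 1 \<longrightarrow> norm (F k (a + h) - F k a - Df k h) \<le> 3 * M * norm h ^ 2)) U"
proof -
  obtain M where M: "eventually (\<lambda>k. holomorphic_n UNIV (F k)
      \<and> (\<forall>x. norm x \<le> norm a + 1 \<longrightarrow> norm (F k x) \<le> M)) U"
    using bO_eventually_bounded_on_cball[OF U F] by blast
  then have "eventually (\<lambda>k. linear (Df k) \<and> (\<forall>c w. Df k (c *s w) = c * Df k w)
      \<and> (\<forall>h. norm (Df k h) \<le> M * norm h)
      \<and> (\<forall>h. norm h \<le> 1 \<longrightarrow> norm (F k (a + h) - F k a - Df k h) \<le> 3 * M * norm h ^ 2)) U"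
  proof eventually_elim
    case (elim k)
    then have hol: "holomorphic_n UNIV (F k)" by blast
    have "norm (F k x) \<le> M" if "dist x a \<le> 1" for x
      using that elim norm_triangle_ineq2[of x a] by (simp add: dist_norm)
    note E = holomorphic_n_first_order_estimates[where c = a, OF hol zero_less_one this]
    show ?case
      using E has_derivative_linear[OF holomorphic_n_derivative(1)[OF hol]]
        holomorphic_n_derivative(2)[OF hol] unfolding Df_def by simp
  qed
  then show ?thesis by blast
qed

lemma holomorphic_n_stfun:
  fixes F :: "nat \<Rightarrow> complex^'n \<Rightarrow> complex"
  assumes U: "nonprincipal_ultrafilter U" and F: "bO U F"
  shows "holomorphic_n UNIV (stfun U F)"
  unfolding holomorphic_n_def
proof
  fix a :: "complex^'n"
  define Df where "Df k = frechet_derivative (F k) (at a)" for k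
  obtain M where est: "eventually (\<lambda>k. linear (Df k) \<and> (\<forall>c w. Df k (c *s w) = c * Df k w)
      \<and> (\<forall>h. norm (Df k h) \<le> M * norm h)
      \<and> (\<forall>h. norm h \<le> 1 \<longrightarrow> norm (F k (a + h) - F k a - Df k h) \<le> 3 * M * norm h ^ 2)) U"
    using bO_eventually_first_order_estimates[OF U F, of a] unfolding Df_def by blast
  define D where "D h = stpart U (\<lambda>k. Df k h)" for h
  have Dlim: "((\<lambda>k. Df k h) \<longlongrightarrow> D h) U" for h
  proof -
    have "eventually (\<lambda>k. norm (Df k h) \<le> M * norm h) U"
      using est by (auto elim: eventually_mono)
    then obtain l where "((\<lambda>k. Df k h) \<longlongrightarrow> l) U"
      using nonprincipal_ultrafilter_bounded_convergent[OF U, of "\<lambda>k. Df k h"] by blast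
    with stpart_eq_limit[OF U this] show ?thesis by (simp add: D_def)
  qed
  have "(stfun U F has_derivative D) (at a)"
    by (rule has_derivative_limit[OF nonprincipal_ultrafilter_nonbot[OF U] zero_less_one
          tendsto_stfun[OF U F] Dlim]) (use est in \<open>auto elim: eventually_mono\<close>)
  moreover have "D (c *s w) = c * D w" for c w
  proof (rule tendsto_unique[OF nonprincipal_ultrafilter_nonbot[OF U] Dlim])
    show "((\<lambda>k. Df k (c *s w)) \<longlongrightarrow> c * D w) U"
      using tendsto_mult_left[OF Dlim] by (rule Lim_transform_eventually)
        (use est in \<open>auto elim: eventually_mono\<close>)
  qed
  ultimately show "\<exists>D. (stfun U F has_derivative D) (at a) \<and> (\<forall>c v. D (c *s v) = c * D v)"
    by blast
qed

lemma stfun_eq_0_on_shadow_hzeros: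
  assumes U: "nonprincipal_ultrafilter U" and F: "bO U F" and a: "a \<in> shadow U (hzeros U F)"
  shows "stfun U F a = 0"
proof -
  obtain x where x0: "eventually (\<lambda>k. F k (x k) = 0) U" and xa: "(x \<longlongrightarrow> a) U"
    using a by (auto simp: shadow_def hzeros_def inf_close_iff_tendsto)
  obtain M where M: "eventually (\<lambda>k. holomorphic_n UNIV (F k)
      \<and> (\<forall>y. norm y \<le> norm a + 1 + 1 \<longrightarrow> norm (F k y) \<le> M)) U"
    using bO_eventually_bounded_on_cball[OF U F] by blast
  have "eventually (\<lambda>k. norm (F k a) \<le> 4 * M * dist (x k) a) U"
    using tendstoD[OF xa zero_less_one] M x0
  proof eventually_elim
    case (elim k)
    then have "norm (x k) \<le> norm a + 1"
      using norm_triangle_ineq2[of "x k" a] by (simp add: dist_norm)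
    with elim have "norm (F k (x k) - F k a) \<le> 4 * M * dist (x k) a"
      by (intro holomorphic_n_lipschitz[of "F k" "norm a + 1"]) auto
    with elim show ?case by simp
  qed
  moreover have "((\<lambda>k. dist (x k) a) \<longlongrightarrow> 0) U"
    using tendsto_dist[OF xa tendsto_const[of a]] by simp
  then have "((\<lambda>k. 4 * M * dist (x k) a) \<longlongrightarrow> 0) U"
    by (rule tendsto_mult_right_zero)
  ultimately have "((\<lambda>k. F k a) \<longlongrightarrow> 0) U"
    by (rule Lim_null_comparison)
  then show ?thesis by (simp add: stfun_def stpart_eq_limit[OF U])
qed

lemma uniform_limit_stfun_line:
  fixes F :: "nat \<Rightarrow> complex^'n \<Rightarrow> complex"
  assumes U: "nonprincipal_ultrafilter U" and F: "bO U F"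
  shows "uniform_limit (cball 0 R) (\<lambda>k t. F k (a + t *s v)) (\<lambda>t. stfun U F (a + t *s v)) U"
proof -
  obtain M where M: "eventually (\<lambda>k. holomorphic_n UNIV (F k)
      \<and> (\<forall>x. norm x \<le> norm a + R * norm v + 1 \<longrightarrow> norm (F k x) \<le> M)) U"
    using bO_eventually_bounded_on_cball[OF U F] by blast
  have on_line: "norm (a + t *s v) \<le> norm a + R * norm v" if "t \<in> cball 0 R" for t
    using that norm_triangle_ineq[of a "t *s v"] mult_right_mono[of "norm t" R "norm v"]
    by (simp add: norm_smult_vec)
  have dist_line: "dist (a + s *s v) (a + t *s v) = norm v * dist s t" for s t
  proof -
    have "dist (a + s *s v) (a + t *s v) = norm ((s - t) *s v)"
      by (simp add: dist_norm vector_sub_rdistrib)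
    then show ?thesis unfolding norm_smult_vec by (simp add: dist_norm mult.commute)
  qed
  show ?thesis
  proof (rule uniform_limit_equi_lipschitz[OF compact_cball nonprincipal_ultrafilter_nonbot[OF U]])
    show "((\<lambda>k. F k (a + t *s v)) \<longlongrightarrow> stfun U F (a + t *s v)) U" for t
      by (rule tendsto_stfun[OF U F])
    show "eventually (\<lambda>k. \<forall>s\<in>cball 0 R. \<forall>t\<in>cball 0 R.
        dist (F k (a + s *s v)) (F k (a + t *s v)) \<le> 4 * M * norm v * dist s t) U"
      using M
    proof eventually_elim
      case (elim k)
      show ?case
      proof (intro ballI)
        fix s t :: complex assume "s \<in> cball 0 R" "t \<in> cball 0 R"
        have "norm (F k (a + s *s v) - F k (a + t *s v))
            \<le> 4 * M * dist (a + s *s v) (a + t *s v)"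
          using elim on_line[OF \<open>s \<in> cball 0 R\<close>] on_line[OF \<open>t \<in> cball 0 R\<close>]
          by (intro holomorphic_n_lipschitz) auto
        then show "dist (F k (a + s *s v)) (F k (a + t *s v)) \<le> 4 * M * norm v * dist s t"
          unfolding dist_line dist_norm[of "F k _"] by (simp add: mult_ac)
      qed
    qed
  qed
qed

lemma stfun_zero_eventually_line_zeros:
  fixes F :: "nat \<Rightarrow> complex^'n \<Rightarrow> complex"
  assumes U: "nonprincipal_ultrafilter U" and F: "bO U F"
    and a: "stfun U F a = 0" and v: "stfun U F (a + v) \<noteq> 0" and \<rho>: "\<rho> > 0"
  shows "eventually (\<lambda>k. \<exists>t\<in>ball 0 \<rho>. F k (a + t *s v) = 0) U"
proof (rule ccontr)
  assume "\<not> ?thesis"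
  from nonprincipal_ultrafilter_eventually_not[OF U this]
  have "eventually (\<lambda>k. \<forall>t\<in>ball 0 \<rho>. F k (a + t *s v) \<noteq> 0) U"
    by simp
  moreover have "eventually (\<lambda>k. holomorphic_n UNIV (F k)) U"
    using F by (simp add: bO_def internal_entire_def)
  ultimately have "eventually (\<lambda>k. holomorphic_n UNIV (F k) \<and> (\<forall>t\<in>ball 0 \<rho>. F k (a + t *s v) \<noteq> 0)) U"
    by (rule eventually_conj[rotated])
  then obtain r where r: "\<And>j. holomorphic_n UNIV (F (r j)) \<and> (\<forall>t\<in>ball 0 \<rho>. F (r j) (a + t *s v) \<noteq> 0)"
    and lim: "uniform_limit (cball 0 \<rho>) (\<lambda>j t. F (r j) (a + t *s v)) (\<lambda>t. stfun U F (a + t *s v)) sequentially"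
    using uniform_limit_extract_sequence[OF uniform_limit_stfun_line[OF U F]
        nonprincipal_ultrafilter_nonbot[OF U]] by blast
  define \<phi> where "\<phi> t = stfun U F (a + t *s v)" for t
  have hol_\<phi>: "\<phi> holomorphic_on UNIV"
    unfolding \<phi>_def by (rule holomorphic_on_line[OF holomorphic_n_stfun[OF U F]])
  have "\<phi> 0 \<noteq> 0"
  proof (rule Hurwitz_no_zeros[of "ball 0 \<rho>" "\<lambda>j t. F (r j) (a + t *s v)" \<phi> 0])
    show "(\<lambda>t. F (r j) (a + t *s v)) holomorphic_on ball 0 \<rho>" for j
      using holomorphic_on_line r holomorphic_on_subset by blast
    show "uniform_limit K (\<lambda>j t. F (r j) (a + t *s v)) \<phi> sequentially"
      if "compact K" "K \<subseteq> ball 0 \<rho>" for K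
      unfolding \<phi>_def by (rule uniform_limit_on_subset[OF lim]) (use that(2) in auto)
    have "\<phi> 0 \<noteq> \<phi> 1" using a v by (simp add: \<phi>_def)
    then show "\<not> \<phi> constant_on ball 0 \<rho>"
      by (rule entire_nonconstant_not_constant_on_ball[OF hol_\<phi> _ \<rho>])
  qed (use hol_\<phi> r \<rho> in auto)
  with a show False by (simp add: \<phi>_def)
qed

lemma shadow_hzeros_if_stfun_eq_0:
  fixes F :: "nat \<Rightarrow> complex^'n \<Rightarrow> complex"
  assumes U: "nonprincipal_ultrafilter U" and F: "bO U F"
    and b: "stfun U F b \<noteq> 0" and a: "stfun U F a = 0"
  shows "a \<in> shadow U (hzeros U F)"
proof -
  define v where "v = b - a"
  have zeros_near: "eventually (\<lambda>k. \<exists>x. dist x a < e \<and> F k x = 0) U" if e: "e > 0" for e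
  proof -
    define \<rho> where "\<rho> = e / (norm v + 1)"
    have v1: "norm v + 1 > 0" by (simp add: add_nonneg_pos)
    have near: "dist (a + t *s v) a < e" if "t \<in> ball 0 \<rho>" for t
    proof -
      have "norm t * norm v \<le> \<rho> * norm v"
        using that by (intro mult_right_mono) auto
      also have "\<dots> < e" using e v1 by (simp add: \<rho>_def field_simps)
      finally show ?thesis by (simp add: dist_norm norm_smult_vec)
    qed
    have "\<rho> > 0" using e v1 by (simp add: \<rho>_def)
    with a b have "eventually (\<lambda>k. \<exists>t\<in>ball 0 \<rho>. F k (a + t *s v) = 0) U"
      by (intro stfun_zero_eventually_line_zeros[OF U F]) (simp_all add: v_def)
    then show ?thesis by (rule eventually_mono) (use near in blast)
  qed
  obtain x where "(x \<longlongrightarrow> a) U" "eventually (\<lambda>k. F k (x k) = 0) U"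
    using nonprincipal_ultrafilter_tendsto_witness[OF U zeros_near] by blast
  then show ?thesis by (auto simp: shadow_def hzeros_def inf_close_iff_tendsto)
qed

theorem proposition2p4p1:
  fixes U :: "nat filter" and F :: "nat \<Rightarrow> complex^'n \<Rightarrow> complex"
  assumes "nonprincipal_ultrafilter U"
    and "bO U F"
  shows "holomorphic_n UNIV (stfun U F)
    \<and> shadow U (hzeros U F) \<subseteq> {a. stfun U F a = 0}
    \<and> ((\<exists>a b. stfun U F a \<noteq> stfun U F b) \<longrightarrow> shadow U (hzeros U F) = {a. stfun U F a = 0})"
proof (intro conjI impI)
  show "holomorphic_n UNIV (stfun U F)" by (rule holomorphic_n_stfun[OF assms])
  show shadow_sub: "shadow U (hzeros U F) \<subseteq> {a. stfun U F a = 0}"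
    using stfun_eq_0_on_shadow_hzeros[OF assms] by blast
  assume "\<exists>a b. stfun U F a \<noteq> stfun U F b"
  then obtain b where "stfun U F b \<noteq> 0" by metis
  with shadow_hzeros_if_stfun_eq_0[OF assms] shadow_sub
  show "shadow U (hzeros U F) = {a. stfun U F a = 0}" by blast
qed

end
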